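(* Let $T\ge1$, $n\ge2$, $\mu\in\mathbb{R}$, $\sigma>0$, $z^*\in\mathbb{R}$, $\tau\in\{1,\dots,T\}$. Under $\mathbf{H_0}$ the real numbers $X_{t,k}$ ($t\le T$, $k\le n$) are i.i.d. $\mathcal{N}(\mu,\sigma^2)$; under $\mathbf{H_1^\tau}$ they are generated the same way and then $X_{\tau,J}$ is replaced by $z^*$, with $J$ uniform on $\{1,\dots,n\}$ independent of the data. Let $\bar X_\tau=\frac1n\sum_{k=1}^nX_{\tau,k}$ and \[ \log\mathrm{LR}_\tau=-\frac12\log\Big(\frac{n-1}{n}\Big)-\frac{n}{2(n-1)\sigma^2}(\bar X_\tau-\mu)^2+\frac{(z^*-\mu)n}{(n-1)\sigma^2}(\bar X_\tau-\mu)-\frac{(z^*-\mu)^2}{2(n-1)\sigma^2}. \] For a threshold $\gamma\in\mathbb{R}$ let $\alpha(\gamma)=\mathbb{P}_{\mathbf{H_0}}(\log\mathrm{LR}_\tau\ge\gamma)$. Define $\gamma_{\max}=\frac12\big[\frac{(z^*-\mu)^2}{\sigma^2}-\log\big(\frac{n-1}{n}\big)\big]$, $m^*=\frac{(z^*-\mu)^2}{\sigma^2}$, $a=\sqrt{m^*n}$ and, for $\gamma\le\gamma_{\max}$, $b(\gamma)=\sqrt{(n-1)\big(m^*-\log(1-\frac1n)-2\gamma\big)}$. Then $\alpha(\gamma)=0$ for $\gamma>\gamma_{\max}$, and for $\gamma\le\gamma_{\max}$, \[ \alpha(\gamma)=\Phi(a+b(\gamma))-\Phi(a-b(\gamma)),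 \] where $\Phi$ is the standard normal cumulative distribution function.
   Context: $\alpha(\gamma)$ is the Type I error of the test that declares "target present" when $\log\mathrm{LR}_\tau\ge\gamma$. *)

theory Defs
  imports "HOL-Probability.Probability"
begin

definition Phi :: "real \<Rightarrow> real" where
  "Phi x = measure (density lborel std_normal_density) {..x}"

definition xbar :: "nat \<Rightarrow> (nat \<Rightarrow> nat \<Rightarrow> real) \<Rightarrow> nat \<Rightarrow> real" where
  "xbar n x \<tau> = (\<Sum>k=1..n. x \<tau> k) / real n"

definition logLR :: "nat \<Rightarrow> real \<Rightarrow> real \<Rightarrow> real \<Rightarrow> real \<Rightarrow> real" where
  "logLR n \<mu> \<sigma> zs xb =
     - (1/2) * ln ((real n - 1) / real n)
     - real n / (2 * (real n - 1) * \<sigma>\<^sup>2) * (xb - \<mu>)\<^sup>2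
     + (zs - \<mu>) * real n / ((real n - 1) * \<sigma>\<^sup>2) * (xb - \<mu>)
     - (zs - \<mu>)\<^sup>2 / (2 * (real n - 1) * \<sigma>\<^sup>2)"

definition gamma_max :: "nat \<Rightarrow> real \<Rightarrow> real \<Rightarrow> real \<Rightarrow> real" where
  "gamma_max n \<mu> \<sigma> zs = (1/2) * ((zs - \<mu>)\<^sup>2 / \<sigma>\<^sup>2 - ln ((real n - 1) / real n))"

definition mstar :: "real \<Rightarrow> real \<Rightarrow> real \<Rightarrow> real" where
  "mstar \<mu> \<sigma> zs = (zs - \<mu>)\<^sup>2 / \<sigma>\<^sup>2"

definition a_const :: "nat \<Rightarrow> real \<Rightarrow> real \<Rightarrow> real \<Rightarrow> real" where
  "a_const n \<mu> \<sigma> zs = sqrt (mstar \<mu> \<sigma> zs * real n)"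

definition b_fun :: "nat \<Rightarrow> real \<Rightarrow> real \<Rightarrow> real \<Rightarrow> real \<Rightarrow> real" where
  "b_fun n \<mu> \<sigma> zs \<gamma> =
     sqrt ((real n - 1) * (mstar \<mu> \<sigma> zs - ln (1 - 1 / real n) - 2 * \<gamma>))"

definition alpha :: "'w measure \<Rightarrow> (nat \<Rightarrow> nat \<Rightarrow> 'w \<Rightarrow> real) \<Rightarrow> nat \<Rightarrow> nat
      \<Rightarrow> real \<Rightarrow> real \<Rightarrow> real \<Rightarrow> real \<Rightarrow> real" where
  "alpha M X n \<tau> \<mu> \<sigma> zs \<gamma> =
     measure M {\<omega> \<in> space M. logLR n \<mu> \<sigma> zs (xbar n (\<lambda>t k. X t k \<omega>) \<tau>) \<ge> \<gamma>}"

end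

theory Submission
  imports Defs
begin

text \<open>As a function of the row mean \<open>m\<close>, \<open>log LR\<^sub>\<tau>\<close> is the concave parabola
  \<open>\<gamma>\<^sub>m\<^sub>a\<^sub>x - n (m - z*)\<^sup>2 / (2 (n - 1) \<sigma>\<^sup>2)\<close>, so \<open>log LR\<^sub>\<tau> \<ge> \<gamma>\<close> means
  \<open>(\<surd>n (m - z*) / \<sigma>)\<^sup>2 \<le> b(\<gamma>)\<^sup>2\<close>, which is impossible for \<open>\<gamma> > \<gamma>\<^sub>m\<^sub>a\<^sub>x\<close>.
  Under H0, \<open>Z = \<surd>n (m - \<mu>) / \<sigma>\<close> is standard normal and \<open>\<surd>n (z* - \<mu>) / \<sigma> = \<plusminus>a\<close>;
  replacing \<open>Z\<close> by \<open>-Z\<close> when the sign is negative, the event becomes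
  \<open>a - b(\<gamma>) \<le> Z \<le> a + b(\<gamma>)\<close>.\<close>

lemma null_sets_std_normal_singleton:
  "{x} \<in> null_sets (density lborel std_normal_density)"
proof -
  have "AE y in lborel. y \<in> {x} \<longrightarrow> ennreal (std_normal_density y) = 0"
    using AE_lborel_singleton[of x] by eventually_elim auto
  then show ?thesis by (subst null_sets_density_iff) auto
qed

lemma measure_std_normal_atLeastAtMost:
  assumes "a \<le> b"
  shows "measure (density lborel std_normal_density) {a..b} = Phi b - Phi a"
proof -
  let ?N = "density lborel std_normal_density"
  interpret N: prob_space ?N by (rule prob_space_normal_density) simp
  have "{..b} = {..a} \<union> {a<..b}"
    using assms by auto
  moreover have "measure ?N ({..a} \<union> {a<..b}) = Phi a + measure ?N {a<..b}"
    unfolding Phi_def by (rule N.finite_measure_Union) auto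
  moreover have "{a..b} = {a<..b} \<union> {a}"
    using assms by auto
  moreover have "measure ?N ({a<..b} \<union> {a}) = measure ?N {a<..b}"
    by (rule measure_Un_null_set) (simp_all add: null_sets_std_normal_singleton)
  ultimately show ?thesis
    unfolding Phi_def by simp
qed

lemma measure_std_normal_square_le:
  "measure (density lborel std_normal_density) {z. (z - a)\<^sup>2 \<le> K} =
     (if K < 0 then 0 else Phi (a + sqrt K) - Phi (a - sqrt K))"
proof -
  \<comment> \<open>no case split on the sign of \<open>K\<close>: \<open>sqrt\<close> is odd, so for \<open>K < 0\<close> both sides are empty\<close>
  have "{z. (z - a)\<^sup>2 \<le> K} = {z. \<bar>z - a\<bar> \<le> sqrt K}"
    by (intro Collect_cong) (metis real_sqrt_abs real_sqrt_le_iff)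
  also have "\<dots> = {a - sqrt K..a + sqrt K}"
    by (auto simp: abs_le_iff)
  finally show ?thesis
    by (simp add: measure_std_normal_atLeastAtMost)
qed

lemma measure_distributed:
  assumes "distributed M N X f" "A \<in> sets N"
  shows "measure M (X -` A \<inter> space M) = measure (density N f) A"
  using assms by (simp add: measure_distr distributed_distr_eq_density[symmetric])

lemma (in prob_space) distributed_sum_iid_normal:
  assumes "finite I" "I \<noteq> {}" "indep_vars (\<lambda>_. borel) X I" "\<sigma> > 0"
    and "\<And>i. i \<in> I \<Longrightarrow> distributed M lborel (X i) (normal_density \<mu> \<sigma>)"
  shows "distributed M lborel (\<lambda>\<omega>. \<Sum>i\<in>I. X i \<omega>)
           (normal_density (real (card I) * \<mu>) (sqrt (real (card I)) * \<sigma>))"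
  using sum_indep_normal[OF assms(1-3), of "\<lambda>_. \<sigma>" "\<lambda>_. \<mu>"] assms(4,5)
  by (simp add: real_sqrt_mult)

lemma (in prob_space) distributed_std_normal_sign:
  assumes "distributed M lborel Z std_normal_density" "\<bar>s\<bar> = 1"
  shows "distributed M lborel (\<lambda>\<omega>. s * Z \<omega>) std_normal_density"
  using normal_density_affine[OF assms(1), of s 0] assms(2) by simp

lemma (in prob_space) distributed_signed_standardization:
  assumes "distributed M lborel Y (normal_density m v)" "v > 0" "\<bar>s\<bar> = 1"
  shows "distributed M lborel (\<lambda>\<omega>. s * ((Y \<omega> - m) / v)) std_normal_density"
  using normal_standard_normal_convert[OF assms(2), THEN iffD1, OF assms(1)] assms(3)
  by (rule distributed_std_normal_sign)

lemma (in prob_space) distributed_row_mean_normal: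
  fixes X :: "nat \<Rightarrow> nat \<Rightarrow> 'a \<Rightarrow> real"
  assumes "indep_vars (\<lambda>_. borel) (\<lambda>p. X (fst p) (snd p)) (R \<times> {1..n})" "\<tau> \<in> R"
    and "n \<ge> 1" "\<sigma> > 0"
    and "\<And>k. k \<in> {1..n} \<Longrightarrow> distributed M lborel (X \<tau> k) (normal_density \<mu> \<sigma>)"
  shows "distributed M lborel (\<lambda>\<omega>. xbar n (\<lambda>t k. X t k \<omega>) \<tau>)
           (normal_density \<mu> (\<sigma> / sqrt (real n)))"
proof -
  have row: "{\<tau>} \<times> {1..n} = Pair \<tau> ` {1..n}"
    by auto
  have "{\<tau>} \<times> {1..n} \<subseteq> R \<times> {1..n}"
    using assms(2) by blast
  with assms(1) have indep: "indep_vars (\<lambda>_. borel) (\<lambda>p. X (fst p) (snd p)) ({\<tau>} \<times> {1..n})"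
    by (rule indep_vars_subset)
  have "distributed M lborel (\<lambda>\<omega>. \<Sum>p\<in>{\<tau>} \<times> {1..n}. X (fst p) (snd p) \<omega>)
      (normal_density (real (card ({\<tau>} \<times> {1..n})) * \<mu>) (sqrt (real (card ({\<tau>} \<times> {1..n}))) * \<sigma>))"
    by (rule distributed_sum_iid_normal[OF _ _ indep]) (use assms(3-5) in auto)
  moreover have "(\<Sum>p\<in>{\<tau>} \<times> {1..n}. X (fst p) (snd p) \<omega>) = (\<Sum>k=1..n. X \<tau> k \<omega>)" for \<omega>
    unfolding row by (simp add: sum.reindex inj_on_def)
  ultimately have "distributed M lborel (\<lambda>\<omega>. \<Sum>k=1..n. X \<tau> k \<omega>)
      (normal_density (real n * \<mu>) (sqrt (real n) * \<sigma>))"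
    by (simp add: card_cartesian_product)
  then have "distributed M lborel (\<lambda>\<omega>. 0 + 1 / real n * (\<Sum>k=1..n. X \<tau> k \<omega>))
      (normal_density (0 + 1 / real n * (real n * \<mu>)) (\<bar>1 / real n\<bar> * (sqrt (real n) * \<sigma>)))"
    by (rule normal_density_affine) (use assms(3,4) in auto)
  moreover have "\<bar>1 / real n\<bar> * (sqrt (real n) * \<sigma>) = \<sigma> / sqrt (real n)"
    using assms(3) by (simp add: field_simps real_sqrt_divide flip: real_sqrt_mult_self)
  ultimately show ?thesis
    using assms(3) unfolding xbar_def by simp
qed

lemma logLR_eq_gamma_max:
  assumes "n \<noteq> 1" "\<sigma> \<noteq> 0"
  shows "logLR n \<mu> \<sigma> zs y =
    gamma_max n \<mu> \<sigma> zs - real n / (2 * (real n - 1) * \<sigma>\<^sup>2) * (y - zs)\<^sup>2"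
proof -
  have "real n - 1 \<noteq> 0"
    using assms(1) by simp
  then show ?thesis
    using assms(2) unfolding logLR_def gamma_max_def
    by (simp add: divide_simps) (simp add: algebra_simps power2_eq_square)
qed

lemma logLR_ge_iff:
  assumes "n \<ge> 2" "\<sigma> > 0"
  shows "\<gamma> \<le> logLR n \<mu> \<sigma> zs y \<longleftrightarrow>
    (sqrt (real n) * (y - zs) / \<sigma>)\<^sup>2 \<le> 2 * (real n - 1) * (gamma_max n \<mu> \<sigma> zs - \<gamma>)"
proof -
  define q where "q = real n / (2 * (real n - 1) * \<sigma>\<^sup>2) * (y - zs)\<^sup>2"
  have n1: "real n - 1 > 0"
    using assms(1) by simp
  have "logLR n \<mu> \<sigma> zs y = gamma_max n \<mu> \<sigma> zs - q"
    unfolding q_def using assms by (intro logLR_eq_gamma_max) auto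
  then have "\<gamma> \<le> logLR n \<mu> \<sigma> zs y \<longleftrightarrow> q \<le> gamma_max n \<mu> \<sigma> zs - \<gamma>"
    by linarith
  also have "\<dots> \<longleftrightarrow> 2 * (real n - 1) * q \<le> 2 * (real n - 1) * (gamma_max n \<mu> \<sigma> zs - \<gamma>)"
    using n1 by simp
  also have "2 * (real n - 1) * q = (sqrt (real n) * (y - zs) / \<sigma>)\<^sup>2"
    using n1 assms(2) by (simp add: q_def power_divide power_mult_distrib)
  finally show ?thesis .
qed

lemma b_fun_eq:
  "b_fun n \<mu> \<sigma> zs \<gamma> = sqrt (2 * (real n - 1) * (gamma_max n \<mu> \<sigma> zs - \<gamma>))"
proof -
  have "ln (1 - 1 / real n) = ln ((real n - 1) / real n)"
    by (cases "n = 0") (simp_all add: field_simps)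
  then show ?thesis
    unfolding b_fun_def gamma_max_def mstar_def[symmetric] by (simp add: field_simps)
qed

lemma square_deviation_eq_shifted_standardized:
  assumes "\<sigma> > 0" "s = (if 0 \<le> zs - \<mu> then 1 else -1)"
  shows "(sqrt (real n) * (y - zs) / \<sigma>)\<^sup>2 =
    (s * sqrt (real n) * (y - \<mu>) / \<sigma> - a_const n \<mu> \<sigma> zs)\<^sup>2"
proof -
  have "a_const n \<mu> \<sigma> zs = s * sqrt (real n) * (zs - \<mu>) / \<sigma>"
    using assms unfolding a_const_def mstar_def
    by (simp add: real_sqrt_mult real_sqrt_divide abs_if)
  then have "s * sqrt (real n) * (y - \<mu>) / \<sigma> - a_const n \<mu> \<sigma> zs =
      s * (sqrt (real n) * (y - zs) / \<sigma>)"
    by (simp add: algebra_simps diff_divide_distrib)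
  moreover have "s\<^sup>2 = 1"
    using assms(2) by simp
  ultimately show ?thesis
    by (metis power_mult_distrib mult_1)
qed

theorem lemma3p5:
  fixes M :: "'w measure" and X :: "nat \<Rightarrow> nat \<Rightarrow> 'w \<Rightarrow> real"
    and T n \<tau> :: nat and \<mu> \<sigma> zs \<gamma> :: real
  assumes "prob_space M"
    and "T \<ge> 1" and "n \<ge> 2" and "\<sigma> > 0" and "\<tau> \<in> {1..T}"
    and "prob_space.indep_vars M (\<lambda>_. borel) (\<lambda>p. X (fst p) (snd p)) ({1..T} \<times> {1..n})"
    and "\<And>t k. t \<in> {1..T} \<Longrightarrow> k \<in> {1..n} \<Longrightarrow>
           distributed M lborel (X t k) (\<lambda>x. ennreal (normal_density \<mu> \<sigma> x))"
  shows "(\<gamma> > gamma_max n \<mu> \<sigma> zs \<longrightarrow> alpha M X n \<tau> \<mu> \<sigma> zs \<gamma> = 0)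
       \<and> (\<gamma> \<le> gamma_max n \<mu> \<sigma> zs \<longrightarrow>
            alpha M X n \<tau> \<mu> \<sigma> zs \<gamma> =
              Phi (a_const n \<mu> \<sigma> zs + b_fun n \<mu> \<sigma> zs \<gamma>)
              - Phi (a_const n \<mu> \<sigma> zs - b_fun n \<mu> \<sigma> zs \<gamma>))"
proof -
  interpret prob_space M
    by (rule assms(1))
  define s :: real where "s = (if 0 \<le> zs - \<mu> then 1 else -1)"
  define Z where "Z \<omega> = s * sqrt (real n) * (xbar n (\<lambda>t k. X t k \<omega>) \<tau> - \<mu>) / \<sigma>" for \<omega>
  define K where "K = 2 * (real n - 1) * (gamma_max n \<mu> \<sigma> zs - \<gamma>)"
  have "distributed M lborel (\<lambda>\<omega>. xbar n (\<lambda>t k. X t k \<omega>) \<tau>) (normal_density \<mu> (\<sigma> / sqrt (real n)))"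
    by (rule distributed_row_mean_normal[OF assms(6)]) (use assms in auto)
  then have "distributed M lborel (\<lambda>\<omega>. s * ((xbar n (\<lambda>t k. X t k \<omega>) \<tau> - \<mu>) / (\<sigma> / sqrt (real n))))
      std_normal_density"
    by (rule distributed_signed_standardization) (use assms(3,4) in \<open>simp_all add: s_def\<close>)
  then have Z: "distributed M lborel Z std_normal_density"
    unfolding Z_def using assms(3) by (simp add: field_simps)
  have "\<gamma> \<le> logLR n \<mu> \<sigma> zs (xbar n (\<lambda>t k. X t k \<omega>) \<tau>) \<longleftrightarrow> (Z \<omega> - a_const n \<mu> \<sigma> zs)\<^sup>2 \<le> K" for \<omega>
    unfolding logLR_ge_iff[OF assms(3,4)] Z_def K_def
    by (simp only: square_deviation_eq_shifted_standardized[OF assms(4) s_def])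
  then have "{\<omega> \<in> space M. \<gamma> \<le> logLR n \<mu> \<sigma> zs (xbar n (\<lambda>t k. X t k \<omega>) \<tau>)} =
      Z -` {z. (z - a_const n \<mu> \<sigma> zs)\<^sup>2 \<le> K} \<inter> space M"
    by auto
  moreover have "{z. (z - a_const n \<mu> \<sigma> zs)\<^sup>2 \<le> K} \<in> sets lborel"
    by measurable
  ultimately have "alpha M X n \<tau> \<mu> \<sigma> zs \<gamma> =
      measure (density lborel std_normal_density) {z. (z - a_const n \<mu> \<sigma> zs)\<^sup>2 \<le> K}"
    unfolding alpha_def by (simp only: measure_distributed[OF Z])
  moreover have "K < 0 \<longleftrightarrow> gamma_max n \<mu> \<sigma> zs < \<gamma>"
    using assms(3) by (simp add: K_def mult_less_0_iff)
  ultimately show ?thesis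
    by (simp add: measure_std_normal_square_le b_fun_eq K_def)
qed

end
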